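(* Let $k\in\mathbb{N}$, $P$ the uniform distribution on $[0,1]$, $\beta=\{\frac jk:1\leq j\leq k\}$, and $J_{k,j}=[\frac{j-1}k,\frac jk]$ for $1\leq j\leq k$. Let $n\geq k$, let $\alpha_n$ be a conditional optimal set of $n$-points for $P$ with respect to $\beta$, and put $n_j=\mathrm{card}(\alpha_n\cap J_{k,j})$. Then for $2\leq j\leq k$, $|n_1-n_j|\in\{0,1\}$ and $n_1\leq n_j$.
   Context: For a Borel probability measure $P$ on $\mathbb{R}$ and finite $\beta$ with $\mathrm{card}(\beta)=r$, for $n\ge r$, $V_n=\inf\{\int\min_{a\in\alpha\cup\beta}(x-a)^2dP(x):\mathrm{card}(\alpha)\le n-r\}$; a set $\alpha\cup\beta$ attaining the infimum, with each point of $\beta$ having a Voronoi region of positive $P$-measure, is a conditional optimal set of $n$-points with respect to $\beta$ (it contains $\beta$). *)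

theory Defs
  imports "HOL-Probability.Probability"
begin

definition unifP :: "real measure" where
  "unifP = uniform_measure lborel {0..1}"

definition distortion :: "real measure \<Rightarrow> real set \<Rightarrow> real" where
  "distortion P S = (\<integral>x. Min ((\<lambda>a. (x - a)^2) ` S) \<partial>P)"

definition cond_error :: "real measure \<Rightarrow> real set \<Rightarrow> nat \<Rightarrow> real" where
  "cond_error P \<beta> n =
     Inf {distortion P (\<alpha> \<union> \<beta>) | \<alpha>. finite \<alpha> \<and> card \<alpha> \<le> n - card \<beta>}"

definition voronoi :: "real set \<Rightarrow> real \<Rightarrow> real set" where
  "voronoi S b = {x. \<forall>a\<in>S. dist x b \<le> dist x a}"

definition cond_optimal_set :: "real measure \<Rightarrow> real set \<Rightarrow> nat \<Rightarrow> real set \<Rightarrow> bool" where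
  "cond_optimal_set P \<beta> n S \<longleftrightarrow>
     finite \<beta> \<and> card \<beta> \<le> n \<and>
     (\<exists>\<alpha>. finite \<alpha> \<and> card \<alpha> \<le> n - card \<beta> \<and> S = \<alpha> \<union> \<beta>) \<and>
     distortion P S = cond_error P \<beta> n \<and>
     (\<forall>b\<in>\<beta>. measure P (voronoi S b) > 0)"

end

theory Submission
  imports Defs
begin

(* With m + 1 points in a cell of length r that contains both of its endpoints, the quantization
   error of the uniform distribution on the cell is at least r^3 / (12 m^2), attained by equally
   spaced points; on the first cell [0, r], whose left end 0 is not in beta, the bound is the
   same with m replaced by m + 1/2.  If an optimal set has c_1 points in the first and c_j points
   in the j-th cell, redistributing these c_1 + c_j points optimally between the two cells cannot
   lower the error, so (c_1 - 1, c_j - 1) minimizes 1/(a + 1/2)^2 + 1/b^2 among all splits with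
   a + b fixed, and the strict convexity of 1/x^2 forces a <= b <= a + 1.  Points to the left of
   0 are ruled out by the same exchange. *)

definition nearest_sqdist :: "real set \<Rightarrow> real \<Rightarrow> real" where
  "nearest_sqdist T x = Min ((\<lambda>a. (x - a)^2) ` T)"

lemma nearest_sqdist_le: "finite T \<Longrightarrow> a \<in> T \<Longrightarrow> nearest_sqdist T x \<le> (x - a)^2"
  unfolding nearest_sqdist_def by (auto intro: Min_le)

lemma nearest_sqdist_greatest:
  "finite T \<Longrightarrow> T \<noteq> {} \<Longrightarrow> (\<And>a. a \<in> T \<Longrightarrow> c \<le> (x - a)^2) \<Longrightarrow> c \<le> nearest_sqdist T x"
  unfolding nearest_sqdist_def by (auto intro: Min.boundedI)

lemma nearest_sqdist_nonneg: "finite T \<Longrightarrow> T \<noteq> {} \<Longrightarrow> 0 \<le> nearest_sqdist T x"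
  by (rule nearest_sqdist_greatest) auto

lemma nearest_sqdist_singleton [simp]: "nearest_sqdist {a} = (\<lambda>x. (x - a)^2)"
  by (simp add: nearest_sqdist_def fun_eq_iff)

lemma nearest_sqdist_insert:
  "finite T \<Longrightarrow> T \<noteq> {} \<Longrightarrow> nearest_sqdist (insert a T) x = min ((x - a)^2) (nearest_sqdist T x)"
  by (simp add: nearest_sqdist_def)

lemma nearest_sqdist_le_if_closer:
  assumes "finite T" "finite S" "S \<noteq> {}" "\<And>a. a \<in> S \<Longrightarrow> \<exists>b\<in>T. \<bar>x - b\<bar> \<le> \<bar>x - a\<bar>"
  shows "nearest_sqdist T x \<le> nearest_sqdist S x"
proof (rule nearest_sqdist_greatest[OF assms(2,3)])
  fix a assume "a \<in> S"
  then obtain b where "b \<in> T" "\<bar>x - b\<bar> \<le> \<bar>x - a\<bar>" using assms(4) by blast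
  then show "nearest_sqdist T x \<le> (x - a)^2"
    using nearest_sqdist_le[OF assms(1)] abs_le_square_iff order_trans by blast
qed

lemma nearest_sqdist_antimono:
  "finite S \<Longrightarrow> T \<subseteq> S \<Longrightarrow> T \<noteq> {} \<Longrightarrow> nearest_sqdist S x \<le> nearest_sqdist T x"
  by (rule nearest_sqdist_le_if_closer) (auto intro: finite_subset)

lemma nearest_sqdist_restrict:
  assumes "finite S" "p \<in> S" "q \<in> S" "x \<in> {p..q}"
  shows "nearest_sqdist (S \<inter> {p..q}) x = nearest_sqdist S x"
proof (rule antisym)
  show "nearest_sqdist (S \<inter> {p..q}) x \<le> nearest_sqdist S x"
  proof (rule nearest_sqdist_le_if_closer)
    fix a assume "a \<in> S"
    then show "\<exists>b\<in>S \<inter> {p..q}. \<bar>x - b\<bar> \<le> \<bar>x - a\<bar>"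
      using assms by (cases "a < p"; cases "q < a") (force+)
  qed (use assms in auto)
  show "nearest_sqdist S x \<le> nearest_sqdist (S \<inter> {p..q}) x"
    by (rule nearest_sqdist_antimono) (use assms in auto)
qed

lemma continuous_on_nearest_sqdist:
  "finite T \<Longrightarrow> T \<noteq> {} \<Longrightarrow> continuous_on UNIV (nearest_sqdist T)"
proof (induction T rule: finite_ne_induct)
  case (insert a T)
  then show ?case
    by (simp add: nearest_sqdist_insert continuous_intros)
qed (auto intro!: continuous_intros)

lemma nearest_sqdist_integrable_on:
  "finite T \<Longrightarrow> T \<noteq> {} \<Longrightarrow> nearest_sqdist T integrable_on {a..b}"
  by (rule integrable_continuous_interval)
    (auto intro: continuous_on_subset[OF continuous_on_nearest_sqdist])

lemma integral_nearest_sqdist_mono: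
  assumes "finite S" "S \<noteq> {}" "finite T" "T \<noteq> {}"
    and "\<And>x. x \<in> {a..b} \<Longrightarrow> nearest_sqdist S x \<le> nearest_sqdist T x"
  shows "integral {a..b} (nearest_sqdist S) \<le> integral {a..b} (nearest_sqdist T)"
  using assms by (intro integral_le nearest_sqdist_integrable_on) auto

lemma integral_nearest_sqdist_combine:
  "finite T \<Longrightarrow> T \<noteq> {} \<Longrightarrow> a \<le> b \<Longrightarrow> b \<le> c \<Longrightarrow>
    integral {a..b} (nearest_sqdist T) + integral {b..c} (nearest_sqdist T)
      = integral {a..c} (nearest_sqdist T)"
  by (intro Henstock_Kurzweil_Integration.integral_combine nearest_sqdist_integrable_on)

lemma distortion_unifP:
  assumes "finite T" "T \<noteq> {}"
  shows "distortion unifP T = integral {0..1} (nearest_sqdist T)"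
proof -
  have cont: "continuous_on UNIV (nearest_sqdist T)"
    using continuous_on_nearest_sqdist[OF assms] .
  have unifP: "unifP = density lborel (\<lambda>x. ennreal (indicator {0..1::real} x))"
    by (simp add: unifP_def uniform_measure_def divide_ennreal_def ennreal_indicator)
  have "distortion unifP T = integral\<^sup>L unifP (nearest_sqdist T)"
    unfolding distortion_def nearest_sqdist_def ..
  also have "\<dots> = (LINT x : {0..1} | lborel. nearest_sqdist T x)"
    unfolding unifP set_lebesgue_integral_def
    by (rule integral_density) (auto intro: borel_measurable_continuous_onI[OF cont])
  also have "\<dots> = integral {0..1} (nearest_sqdist T)"
    by (rule set_borel_integral_eq_integral, unfold set_integrable_def,
        rule borel_integrable_compact) (auto intro: continuous_on_subset[OF cont])
  finally show ?thesis .
qed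

lemma integral_power2_shift:
  fixes a b c :: real
  assumes "a \<le> b"
  shows "integral {a..b} (\<lambda>x. (x - c)^2) = ((b - c)^3 - (a - c)^3) / 3"
proof -
  have "((\<lambda>x. (x - c)^2) has_integral (b - c)^3 / 3 - (a - c)^3 / 3) {a..b}"
    by (rule fundamental_theorem_of_calculus[OF assms])
      (auto intro!: derivative_eq_intros
        simp: has_real_derivative_iff_has_vector_derivative[symmetric])
  then show ?thesis by (simp add: integral_unique diff_divide_distrib)
qed

lemma integral_nearest_sqdist_pair:
  fixes p q :: real
  assumes "p \<le> q"
  shows "integral {p..q} (nearest_sqdist {p, q}) = (q - p)^3 / 12"
proof -
  define c where "c = (p + q) / 2"
  have c: "p \<le> c" "c \<le> q" using assms by (auto simp: c_def)
  have left: "integral {p..c} (nearest_sqdist {p, q}) = integral {p..c} (\<lambda>x. (x - p)^2)"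
  proof (rule integral_cong)
    fix x assume "x \<in> {p..c}"
    then have "(x - p)^2 \<le> (x - q)^2"
      unfolding abs_le_square_iff[symmetric] using assms by (auto simp: c_def)
    then show "nearest_sqdist {p, q} x = (x - p)^2" by (simp add: nearest_sqdist_insert)
  qed
  have right: "integral {c..q} (nearest_sqdist {p, q}) = integral {c..q} (\<lambda>x. (x - q)^2)"
  proof (rule integral_cong)
    fix x assume "x \<in> {c..q}"
    then have "(x - q)^2 \<le> (x - p)^2"
      unfolding abs_le_square_iff[symmetric] using assms by (auto simp: c_def)
    then show "nearest_sqdist {p, q} x = (x - q)^2" by (simp add: nearest_sqdist_insert)
  qed
  have "integral {p..q} (nearest_sqdist {p, q})
      = integral {p..c} (\<lambda>x. (x - p)^2) + integral {c..q} (\<lambda>x. (x - q)^2)"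
    using integral_nearest_sqdist_combine[of "{p, q}", OF _ _ c] left right by simp
  also have "\<dots> = (q - p)^3 / 12"
    using c by (simp add: integral_power2_shift c_def field_simps power3_eq_cube)
  finally show ?thesis .
qed

lemma cube_div_square_add_le:
  fixes A g \<mu> \<nu> :: real
  assumes "0 < \<mu>" "0 < \<nu>" "0 \<le> A" "0 \<le> g"
  shows "(A + g)^3 / (\<mu> + \<nu>)^2 \<le> A^3 / \<mu>^2 + g^3 / \<nu>^2"
proof -
  define s where "s = (A + g) / (\<mu> + \<nu>)"
  have s: "0 \<le> s" "A + g = (\<mu> + \<nu>) * s" using assms by (auto simp: s_def)
  have tangent: "3 * s^2 * x - 2 * w * s^3 \<le> x^3 / w^2" if "0 < w" "0 \<le> x" for w x :: real
  proof -
    have "0 \<le> (x - w * s)^2 * (x + 2 * w * s)" using that s by simp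
    then have "3 * s^2 * x * w^2 - 2 * w^3 * s^3 \<le> x^3"
      by (simp add: algebra_simps power2_eq_square power3_eq_cube)
    then show ?thesis using that by (simp add: field_simps power2_eq_square power3_eq_cube)
  qed
  have "(A + g)^3 / (\<mu> + \<nu>)^2 = (\<mu> + \<nu>) * s^3"
    using assms unfolding s(2) by (simp add: power_mult_distrib power2_eq_square power3_eq_cube)
  also have "\<dots> = 3 * s^2 * (A + g) - 2 * (\<mu> + \<nu>) * s^3"
    unfolding s(2) by (simp add: power2_eq_square power3_eq_cube algebra_simps)
  also have "\<dots> = (3 * s^2 * A - 2 * \<mu> * s^3) + (3 * s^2 * g - 2 * \<nu> * s^3)"
    by (simp add: algebra_simps)
  also have "\<dots> \<le> A^3 / \<mu>^2 + g^3 / \<nu>^2"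
    using tangent[of \<mu> A] tangent[of \<nu> g] assms by linarith
  finally show ?thesis .
qed

lemma less_if_two_le_card_Icc:
  fixes p q :: real
  assumes "2 \<le> card (S \<inter> {p..q})"
  shows "p < q"
proof (rule ccontr)
  assume "\<not> p < q"
  then have "S \<inter> {p..q} \<subseteq> {p}" by auto
  then have "card (S \<inter> {p..q}) \<le> 1" using card_mono[of "{p}"] by fastforce
  then show False using assms by simp
qed

lemma integral_nearest_sqdist_eq_restrict:
  assumes "finite S" "p \<in> S" "q \<in> S"
  shows "integral {p..q} (nearest_sqdist S) = integral {p..q} (nearest_sqdist (S \<inter> {p..q}))"
  using nearest_sqdist_restrict[OF assms] by (intro integral_cong) simp

lemma integral_nearest_sqdist_ge_fixed_ends:
  fixes p q :: real
  assumes "finite S" "p \<in> S" "q \<in> S" "card (S \<inter> {p..q}) = Suc m" "1 \<le> m"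
  shows "(q - p)^3 / (12 * (real m)^2) \<le> integral {p..q} (nearest_sqdist S)"
  using assms(5,3,4)
proof (induction m arbitrary: q rule: nat_induct_at_least)
  case base
  have pq: "p < q" using base by (intro less_if_two_le_card_Icc[of S]) simp
  then have "{p, q} \<subseteq> S \<inter> {p..q}" using base assms(2) by auto
  then have "S \<inter> {p..q} = {p, q}"
    using base pq by (intro card_seteq[symmetric]) (use assms(1) in auto)
  then show ?case
    using integral_nearest_sqdist_eq_restrict[OF assms(1,2) base(1)]
      integral_nearest_sqdist_pair[of p q] pq by simp
next
  case (Suc m q)
  define T where "T = S \<inter> {p..q} - {q}"
  define q' where "q' = Max T"
  have pq: "p < q" using Suc by (intro less_if_two_le_card_Icc[of S]) simp
  have fin: "finite T" using assms(1) by (simp add: T_def)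
  have card: "card T = Suc m" using Suc pq assms(1) by (simp add: T_def card_Diff_singleton)
  then have "T \<noteq> {}" by auto
  then have q': "q' \<in> T" "\<And>a. a \<in> T \<Longrightarrow> a \<le> q'" using fin by (simp_all add: q'_def)
  have pq': "p \<le> q'" "q' < q" using q' pq assms(2) by (auto simp: T_def)
  have lower: "S \<inter> {p..q'} = T" using q' pq' by (auto simp: T_def)
  have upper: "S \<inter> {q'..q} = {q', q}"
  proof
    show "S \<inter> {q'..q} \<subseteq> {q', q}"
    proof
      fix a assume a: "a \<in> S \<inter> {q'..q}"
      show "a \<in> {q', q}"
      proof (cases "a = q")
        case False
        then have "a \<in> T" using a pq' by (auto simp: T_def)
        then show ?thesis using q'(2)[of a] a by auto
      qed simp
    qed
    show "{q', q} \<subseteq> S \<inter> {q'..q}" using q' pq' Suc.prems(1) by (auto simp: T_def)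
  qed
  have "integral {p..q} (nearest_sqdist S)
      = integral {p..q'} (nearest_sqdist S) + integral {q'..q} (nearest_sqdist S)"
    using integral_nearest_sqdist_combine[OF assms(1) _ pq'(1)] pq' assms(2) by fastforce
  also have "integral {q'..q} (nearest_sqdist S) = (q - q')^3 / 12"
    using integral_nearest_sqdist_eq_restrict[OF assms(1), of q' q] q' Suc.prems(1) pq'
      integral_nearest_sqdist_pair[of q' q] upper by (auto simp: T_def)
  finally have split:
    "integral {p..q} (nearest_sqdist S) = integral {p..q'} (nearest_sqdist S) + (q - q')^3 / 12" .
  have IH: "(q' - p)^3 / (12 * (real m)^2) \<le> integral {p..q'} (nearest_sqdist S)"
    using Suc.IH[of q'] q' card lower by (auto simp: T_def)
  have "(q - p)^3 / (real (Suc m))^2 \<le> (q' - p)^3 / (real m)^2 + (q - q')^3 / 1^2"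
    using cube_div_square_add_le[of "real m" 1 "q' - p" "q - q'"] Suc.hyps pq'
    by (simp add: add.commute)
  then have "(q - p)^3 / (real (Suc m))^2 / 12 \<le> ((q' - p)^3 / (real m)^2 + (q - q')^3) / 12"
    by (simp add: divide_right_mono)
  then show ?case using split IH by (simp add: add_divide_distrib mult.commute)
qed

lemma integral_nearest_sqdist_le_grid:
  fixes a g :: real
  assumes "finite T" "0 \<le> g" "\<And>i. i \<le> m \<Longrightarrow> a + real i * g \<in> T"
  shows "integral {a..a + real m * g} (nearest_sqdist T) \<le> real m * g^3 / 12"
  using assms(3)
proof (induction m)
  case (Suc m)
  let ?u = "a + real m * g" and ?v = "a + real (Suc m) * g"
  have uv: "?u \<in> T" "?v \<in> T" using Suc.prems[of m] Suc.prems[of "Suc m"] by auto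
  have le: "a \<le> ?u" "?u \<le> ?v" using assms(2) by (auto simp: algebra_simps)
  have "integral {?u..?v} (nearest_sqdist T) \<le> integral {?u..?v} (nearest_sqdist {?u, ?v})"
    using uv assms(1) by (intro integral_nearest_sqdist_mono nearest_sqdist_antimono) auto
  also have "\<dots> = g^3 / 12"
    using integral_nearest_sqdist_pair[OF le(2)] by (simp add: algebra_simps)
  finally have "integral {?u..?v} (nearest_sqdist T) \<le> g^3 / 12" .
  moreover have "integral {a..?u} (nearest_sqdist T) \<le> real m * g^3 / 12"
    using Suc by simp
  ultimately show ?case
    using integral_nearest_sqdist_combine[OF assms(1) _ le] uv
    by (fastforce simp: algebra_simps add_divide_distrib)
qed simp

lemma integral_nearest_sqdist_le_equispaced:
  fixes l L :: real
  assumes "finite T" "0 \<le> L" "1 \<le> m" "\<And>i. i \<le> m \<Longrightarrow> l + real i * L / real m \<in> T"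
  shows "integral {l..l + L} (nearest_sqdist T) \<le> L^3 / (12 * (real m)^2)"
proof -
  have "integral {l..l + real m * (L / real m)} (nearest_sqdist T) \<le> real m * (L / real m)^3 / 12"
    using assms by (intro integral_nearest_sqdist_le_grid) auto
  then show ?thesis
    using assms(3) by (simp add: power2_eq_square power3_eq_cube field_simps)
qed

text \<open>On the cell \<open>[0, r]\<close> only the right end is prescribed, and it is optimal to put the
  first point at half the spacing from \<open>0\<close>: the free end counts as half a gap.\<close>
lemma integral_nearest_sqdist_le_free_end:
  fixes r :: real
  assumes "finite T" "0 < r" "\<And>i. i \<le> m \<Longrightarrow> (2 * real i + 1) * r / (2 * real m + 1) \<in> T"
  shows "integral {0..r} (nearest_sqdist T) \<le> r^3 / (12 * (real m + 1/2)^2)"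
proof -
  define h where "h = r / (2 * real m + 1)"
  have "h * (2 * real m + 1) = r" by (simp add: h_def)
  then have h: "r = h + real m * (2 * h)" "0 < h"
    using assms(2) by (simp add: algebra_simps, simp add: h_def)
  have grid: "h + real i * (2 * h) \<in> T" if "i \<le> m" for i
    using assms(3)[OF that] by (simp add: h_def algebra_simps add_divide_distrib)
  then have "h \<in> T" using grid[of 0] by simp
  have "integral {0..h} (nearest_sqdist T) \<le> integral {0..h} (nearest_sqdist {h})"
    using \<open>h \<in> T\<close> assms(1) by (intro integral_nearest_sqdist_mono nearest_sqdist_antimono) auto
  also have "\<dots> = h^3 / 3"
    using integral_power2_shift[of 0 h h] h by simp
  finally have "integral {0..h} (nearest_sqdist T) \<le> h^3 / 3" .
  moreover have "integral {h..r} (nearest_sqdist T) \<le> real m * (2 * h)^3 / 12"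
    using integral_nearest_sqdist_le_grid[OF assms(1), of "2 * h" m h] h grid by simp
  moreover have "integral {0..r} (nearest_sqdist T)
      = integral {0..h} (nearest_sqdist T) + integral {h..r} (nearest_sqdist T)"
    using integral_nearest_sqdist_combine[OF assms(1), of 0 h r] \<open>h \<in> T\<close> h by fastforce
  moreover have "r^3 / (12 * (real m + 1/2)^2) = h^3 / 3 + real m * (2 * h)^3 / 12"
  proof -
    have cancel: "x^3 * y / (3 * x^2) = x * y / 3" if "x \<noteq> 0" for x y :: real
      using that by (simp add: power2_eq_square power3_eq_cube)
    have "12 * (real m + 1/2)^2 = 3 * (2 * real m + 1)^2"
      by (simp add: power2_eq_square algebra_simps)
    moreover have "r = (2 * real m + 1) * h" using h(1) by (simp add: algebra_simps)
    ultimately have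
      "r^3 / (12 * (real m + 1/2)^2) = (2 * real m + 1)^3 * h^3 / (3 * (2 * real m + 1)^2)"
      by (simp add: power_mult_distrib)
    also have "\<dots> = (2 * real m + 1) * h^3 / 3" by (rule cancel) simp
    finally show ?thesis by (simp add: power3_eq_cube algebra_simps)
  qed
  ultimately show ?thesis by linarith
qed

lemma integral_nearest_sqdist_ge_free_end:
  fixes r :: real
  assumes "finite S" "r \<in> S" "\<forall>a\<in>S. 0 \<le> a" "card (S \<inter> {0..r}) = Suc m"
  shows "r^3 / (12 * (real m + 1/2)^2) \<le> integral {0..r} (nearest_sqdist S)"
proof -
  define p where "p = Min (S \<inter> {0..r})"
  have ne: "S \<inter> {0..r} \<noteq> {}" "S \<noteq> {}" using assms(4) by auto
  have p: "p \<in> S" "0 \<le> p" "p \<le> r" using Min_in[OF _ ne(1)] assms(1) by (auto simp: p_def)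
  have p_le: "p \<le> a" if "a \<in> S" for a
    using that assms(1,3) p(3) by (cases "a \<le> r") (auto simp: p_def)
  have "integral {0..p} (nearest_sqdist {p}) \<le> integral {0..p} (nearest_sqdist S)"
  proof (rule integral_nearest_sqdist_mono)
    fix x assume x: "x \<in> {0..p}"
    have "\<bar>x - p\<bar> \<le> \<bar>x - a\<bar>" if "a \<in> S" for a using p_le[OF that] x by auto
    then show "nearest_sqdist {p} x \<le> nearest_sqdist S x"
      by (intro nearest_sqdist_le_if_closer) (use assms(1) ne in auto)
  qed (use assms(1) ne in auto)
  moreover have "integral {0..p} (nearest_sqdist {p}) = p^3 / 3"
    using integral_power2_shift[OF p(2), of p] by simp
  moreover have "p^3 / 3 = p^3 / (12 * (1/2)^2)" by (simp add: power2_eq_square)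
  ultimately have left: "p^3 / (12 * (1/2)^2) \<le> integral {0..p} (nearest_sqdist S)" by simp
  have split: "integral {0..r} (nearest_sqdist S)
      = integral {0..p} (nearest_sqdist S) + integral {p..r} (nearest_sqdist S)"
    using integral_nearest_sqdist_combine[OF assms(1) ne(2) p(2,3)] by simp
  show ?thesis
  proof (cases "m = 0")
    case True
    have "card (S \<inter> {0..r}) = 1" using assms(4) True by simp
    then obtain x where "S \<inter> {0..r} = {x}" by (rule card_1_singletonE)
    moreover have "r \<in> S \<inter> {0..r}" using assms(2,3) by auto
    ultimately have "S \<inter> {0..r} = {r}" by simp
    then have "p = r" by (simp add: p_def)
    then show ?thesis using left True by simp
  next
    case False
    have "x \<in> S \<inter> {p..r} \<longleftrightarrow> x \<in> S \<inter> {0..r}" for x using p(2) p_le[of x] by auto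
    then have "S \<inter> {p..r} = S \<inter> {0..r}" by blast
    then have right: "(r - p)^3 / (12 * (real m)^2) \<le> integral {p..r} (nearest_sqdist S)"
      using False assms by (intro integral_nearest_sqdist_ge_fixed_ends) (use p in auto)
    have div12: "x / (12 * y) = x / y / 12" for x y :: real by simp
    have "r^3 / (real m + 1/2)^2 \<le> (r - p)^3 / (real m)^2 + p^3 / (1/2)^2"
      using cube_div_square_add_le[of "real m" "1/2" "r - p" p] False p by simp
    then have "r^3 / (real m + 1/2)^2 / 12 \<le> ((r - p)^3 / (real m)^2 + p^3 / (1/2)^2) / 12"
      by (rule divide_right_mono) simp
    then have "r^3 / (12 * (real m + 1/2)^2) \<le> p^3 / (12 * (1/2)^2) + (r - p)^3 / (12 * (real m)^2)"
      unfolding div12 add_divide_distrib by linarith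
    then show ?thesis using left right split by linarith
  qed
qed

lemma integral_nearest_sqdist_ge_card:
  fixes r :: real
  assumes "finite S" "0 < r" "r \<in> S"
  shows "r^3 / (12 * (real (card (S \<inter> {0..r})))^2) \<le> integral {0..r} (nearest_sqdist S)"
proof -
  define T where "T = insert 0 S"
  define m where "m = card (T \<inter> {0..r}) - 1"
  have fin: "finite T" "finite (S \<inter> {0..r})" using assms(1) by (auto simp: T_def)
  have "{0, r} \<subseteq> T \<inter> {0..r}" using assms by (auto simp: T_def)
  then have "2 \<le> card (T \<inter> {0..r})"
    using card_mono[of "T \<inter> {0..r}" "{0, r}"] fin assms(2) by auto
  moreover have "card (T \<inter> {0..r}) \<le> Suc (card (S \<inter> {0..r}))"
    using fin unfolding T_def Int_insert_left by (auto simp: card_insert_if)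
  ultimately have m: "card (T \<inter> {0..r}) = Suc m" "1 \<le> m" "m \<le> card (S \<inter> {0..r})"
    by (auto simp: m_def)
  have "r^3 / (12 * (real (card (S \<inter> {0..r})))^2) \<le> r^3 / (12 * (real m)^2)"
    using m assms(2) by (intro divide_left_mono mult_left_mono power_mono) auto
  also have "\<dots> \<le> integral {0..r} (nearest_sqdist T)"
    using integral_nearest_sqdist_ge_fixed_ends[OF fin(1) _ _ m(1,2)] assms by (simp add: T_def)
  also have "\<dots> \<le> integral {0..r} (nearest_sqdist S)"
    using assms fin
    by (intro integral_nearest_sqdist_mono nearest_sqdist_antimono) (auto simp: T_def)
  finally show ?thesis .
qed

lemma inverse_square_decrement_strict_antimono:
  fixes s t :: real
  assumes "1 < s" "s < t"
  shows "1 / (t - 1)^2 - 1 / t^2 < 1 / (s - 1)^2 - 1 / s^2"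
proof -
  have decrement: "1 / (x - 1)^2 - 1 / x^2 = (1 / (x * (x - 1))) * (1 / (x - 1) + 1 / x)"
    if "1 < x" for x :: real
  proof -
    have "1 / (x - 1)^2 - 1 / x^2 = (1 / (x - 1) - 1 / x) * (1 / (x - 1) + 1 / x)"
      by (simp add: power2_eq_square algebra_simps)
    also have "1 / (x - 1) - 1 / x = 1 / (x * (x - 1))"
      using that by (simp add: field_simps)
    finally show ?thesis .
  qed
  have "1 / (t * (t - 1)) < 1 / (s * (s - 1))"
    using assms by (intro divide_strict_left_mono mult_strict_mono) auto
  moreover have "1 / (t - 1) + 1 / t < 1 / (s - 1) + 1 / s"
    using assms by (intro add_strict_mono divide_strict_left_mono) auto
  ultimately have
    "(1 / (t * (t - 1))) * (1 / (t - 1) + 1 / t) < (1 / (s * (s - 1))) * (1 / (s - 1) + 1 / s)"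
    using assms by (intro mult_strict_mono') auto
  then show ?thesis using assms by (simp add: decrement)
qed

text \<open>\<open>a + 1/2\<close> and \<open>b\<close> are the effective numbers of gaps in the first and in the \<open>j\<close>-th
  cell; the error of a cell with \<open>g\<close> effective gaps is proportional to \<open>1 / g\<^sup>2\<close>.\<close>
lemma balanced_if_minimal_split:
  fixes a b :: nat
  assumes "1 \<le> b"
    and minimal: "\<And>m g. 1 \<le> g \<Longrightarrow> m + g = a + b \<Longrightarrow>
      1 / (real a + 1/2)^2 + 1 / (real b)^2 \<le> 1 / (real m + 1/2)^2 + 1 / (real g)^2"
  shows "a \<le> b \<and> b \<le> a + 1"
proof (intro conjI; rule ccontr)
  assume "\<not> a \<le> b"
  then have "1 / (real a + 1/2)^2 + 1 / (real b)^2
      \<le> 1 / (real (a - 1) + 1/2)^2 + 1 / (real (b + 1))^2"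
    using minimal[of "b + 1" "a - 1"] by simp
  moreover have "1 / (real a + 1/2 - 1)^2 - 1 / (real a + 1/2)^2
      < 1 / (real b + 1 - 1)^2 - 1 / (real b + 1)^2"
    using \<open>\<not> a \<le> b\<close> assms(1) by (intro inverse_square_decrement_strict_antimono) auto
  moreover have "real (a - 1) + 1/2 = real a - 1/2" "real (b + 1) = real b + 1"
    using \<open>\<not> a \<le> b\<close> by auto
  ultimately show False by (simp add: add.commute)
next
  assume "\<not> b \<le> a + 1"
  then have "1 / (real a + 1/2)^2 + 1 / (real b)^2
      \<le> 1 / (real (a + 1) + 1/2)^2 + 1 / (real (b - 1))^2"
    using minimal[of "b - 1" "a + 1"] by simp
  moreover have "1 / (real b - 1)^2 - 1 / (real b)^2
      < 1 / (real a + 3/2 - 1)^2 - 1 / (real a + 3/2)^2"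
    using \<open>\<not> b \<le> a + 1\<close> by (intro inverse_square_decrement_strict_antimono) auto
  moreover have "real (a + 1) + 1/2 = real a + 3/2" "real (b - 1) = real b - 1"
    using \<open>\<not> b \<le> a + 1\<close> by auto
  ultimately show False by (simp add: add.commute)
qed

lemma cond_error_le_distortion:
  assumes "finite B" "B \<noteq> {}" "finite S" "B \<subseteq> S" "card S \<le> n"
  shows "cond_error P B n \<le> distortion P S"
  unfolding cond_error_def
proof (rule cInf_lower)
  have "distortion P S = distortion P ((S - B) \<union> B)" "card (S - B) \<le> n - card B"
    using assms card_Diff_subset[of B S] by (auto simp: Un_absorb2)
  then show "distortion P S \<in> {distortion P (\<alpha> \<union> B) |\<alpha>. finite \<alpha> \<and> card \<alpha> \<le> n - card B}"
    using assms(3) by blast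
  have "0 \<le> distortion P (\<alpha> \<union> B)" if "finite \<alpha>" for \<alpha>
    unfolding distortion_def using that assms(1,2)
    by (intro Bochner_Integration.integral_nonneg)
      (simp add: nearest_sqdist_nonneg[unfolded nearest_sqdist_def])
  then show "bdd_below {distortion P (\<alpha> \<union> B) |\<alpha>. finite \<alpha> \<and> card \<alpha> \<le> n - card B}"
    by (intro bdd_belowI[of _ 0]) auto
qed

lemma card_exchange_cells:
  fixes r l u :: real
  assumes "finite S" "finite Q\<^sub>1" "finite Q\<^sub>2" "Q\<^sub>1 \<subseteq> {..r}" "Q\<^sub>2 \<subseteq> {l..u}" "r \<le> l"
    and "r \<in> S" "r \<in> Q\<^sub>1" "l \<in> Q\<^sub>2"
  shows "card ((S - ({..r} \<union> {l..u})) \<union> Q\<^sub>1 \<union> Q\<^sub>2) + card (S \<inter> {..r}) + card (S \<inter> {l..u})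
    \<le> card S + card Q\<^sub>1 + card Q\<^sub>2"
proof -
  let ?A = "{..r} \<union> {l..u}"
  have "{..r} \<inter> {l..u} \<subseteq> {r} \<inter> {l}" using assms(6) by auto
  then have "Q\<^sub>1 \<inter> Q\<^sub>2 = S \<inter> {..r} \<inter> {l..u}"
    using assms(4-9) by blast
  then have overlap: "card (Q\<^sub>1 \<inter> Q\<^sub>2) = card (S \<inter> {..r} \<inter> {l..u})" by simp
  have "card (S - ?A \<union> Q\<^sub>1 \<union> Q\<^sub>2) \<le> card (S - ?A) + card (Q\<^sub>1 \<union> Q\<^sub>2)"
    using card_Un_le[of "S - ?A" "Q\<^sub>1 \<union> Q\<^sub>2"] by (simp add: Un_assoc)
  moreover have "card (Q\<^sub>1 \<union> Q\<^sub>2) + card (Q\<^sub>1 \<inter> Q\<^sub>2) = card Q\<^sub>1 + card Q\<^sub>2"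
    using card_Un_Int[OF assms(2,3)] by simp
  moreover have "card (S \<inter> {..r}) + card (S \<inter> {l..u}) = card (S \<inter> ?A) + card (S \<inter> {..r} \<inter> {l..u})"
    using card_Un_Int[of "S \<inter> {..r}" "S \<inter> {l..u}"] assms(1)
    by (simp add: Int_Un_distrib Int_assoc Int_left_commute)
  moreover have "card S = card (S - ?A) + card (S \<inter> ?A)"
    using card_Int_Diff[OF assms(1), of ?A] by linarith
  ultimately show ?thesis using overlap by linarith
qed

lemma nearest_sqdist_le_outside_exchange:
  fixes r l u x :: real
  assumes "finite S" "S \<noteq> {}" "finite S'" "S - ({..r} \<union> {l..u}) \<subseteq> S'"
    and "r \<in> S'" "l \<in> S'" "u \<in> S'" "r \<le> u" "x \<in> {r..l} \<union> {u..}"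
  shows "nearest_sqdist S' x \<le> nearest_sqdist S x"
proof (rule nearest_sqdist_le_if_closer[OF assms(3,1,2)])
  fix a assume "a \<in> S"
  consider "a \<notin> {..r} \<union> {l..u}" | "a \<le> r" | "a \<in> {l..u}" "x \<le> l" | "a \<in> {l..u}" "u \<le> x"
    using assms(9) by fastforce
  then show "\<exists>b\<in>S'. \<bar>x - b\<bar> \<le> \<bar>x - a\<bar>"
  proof cases
    case 1
    then show ?thesis using \<open>a \<in> S\<close> assms(4) by blast
  next
    case 2
    then show ?thesis using assms(5,8,9) by (intro bexI[of _ r]) auto
  next
    case 3
    then show ?thesis using assms(6,9) by (intro bexI[of _ l]) auto
  next
    case 4
    then show ?thesis using assms(7) by (intro bexI[of _ u]) auto
  qed
qed

locale cond_optimal_cells =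
  fixes B S :: "real set" and n :: nat and r l :: real
  assumes optimal: "cond_optimal_set unifP B n S"
    and r_pos: "0 < r" and r_le_l: "r \<le> l" and cell_le_1: "l + r \<le> 1"
    and cell_ends_in_B: "r \<in> B" "l \<in> B" "l + r \<in> B"
    and B_in_cells: "B \<inter> ({..r} \<union> {l..l + r}) \<subseteq> {r, l, l + r}"
begin

lemma optimalD:
  "finite B" "finite S" "B \<subseteq> S" "card S \<le> n" "distortion unifP S = cond_error unifP B n"
proof -
  obtain \<alpha> where "finite B" "card B \<le> n" "finite \<alpha>" "card \<alpha> \<le> n - card B" "S = \<alpha> \<union> B"
    "distortion unifP S = cond_error unifP B n"
    using optimal unfolding cond_optimal_set_def by blast
  moreover have "card S \<le> card \<alpha> + card B" using \<open>S = \<alpha> \<union> B\<close> card_Un_le by blast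
  ultimately show "finite B" "finite S" "B \<subseteq> S" "card S \<le> n"
    "distortion unifP S = cond_error unifP B n" by auto
qed

lemma cell_ends_in_S: "r \<in> S" "l \<in> S" "l + r \<in> S"
  using cell_ends_in_B optimalD(3) by auto

lemma integral_le_feasible:
  assumes "finite S'" "B \<subseteq> S'" "card S' \<le> n"
  shows "integral {0..1} (nearest_sqdist S) \<le> integral {0..1} (nearest_sqdist S')"
proof -
  have ne: "B \<noteq> {}" "S \<noteq> {}" "S' \<noteq> {}" using cell_ends_in_B cell_ends_in_S assms(2) by auto
  then have "cond_error unifP B n \<le> distortion unifP S'"
    using optimalD(1) assms by (intro cond_error_le_distortion)
  then show ?thesis
    using optimalD(5) distortion_unifP[OF optimalD(2) ne(2)] distortion_unifP[OF assms(1) ne(3)]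
    by simp
qed

lemma integral_le_exchange:
  assumes "finite Q\<^sub>1" "finite Q\<^sub>2" "Q\<^sub>1 \<subseteq> {..r}" "Q\<^sub>2 \<subseteq> {l..l + r}"
    and "r \<in> Q\<^sub>1" "l \<in> Q\<^sub>2" "l + r \<in> Q\<^sub>2"
    and "card Q\<^sub>1 + card Q\<^sub>2 \<le> card (S \<inter> {..r}) + card (S \<inter> {l..l + r})"
  shows "integral {0..r} (nearest_sqdist S) + integral {l..l + r} (nearest_sqdist S)
    \<le> integral {0..r} (nearest_sqdist Q\<^sub>1) + integral {l..l + r} (nearest_sqdist Q\<^sub>2)"
proof -
  define u where "u = l + r"
  define S' where "S' = (S - ({..r} \<union> {l..u})) \<union> Q\<^sub>1 \<union> Q\<^sub>2"
  have fin: "finite S'" "S \<noteq> {}" "S' \<noteq> {}"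
    using optimalD(2) assms(1,2,5) cell_ends_in_S by (auto simp: S'_def)
  have ends: "r \<in> S'" "l \<in> S'" "u \<in> S'" using assms(5-7) by (auto simp: S'_def u_def)
  have "B \<subseteq> S'"
    using optimalD(3) B_in_cells ends by (auto simp: S'_def u_def)
  moreover have "card S' \<le> n"
    using card_exchange_cells[OF optimalD(2) assms(1-4) r_le_l cell_ends_in_S(1) assms(5,6)]
      assms(8) optimalD(4) by (simp add: S'_def u_def)
  ultimately have global: "integral {0..1} (nearest_sqdist S) \<le> integral {0..1} (nearest_sqdist S')"
    using fin by (intro integral_le_feasible)
  have outside: "nearest_sqdist S' x \<le> nearest_sqdist S x" if "x \<in> {r..l} \<union> {u..1}" for x
    using that ends r_pos r_le_l optimalD(2) fin
    by (intro nearest_sqdist_le_outside_exchange[of S S' r l u]) (auto simp: S'_def u_def)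
  have split: "integral {0..1} (nearest_sqdist T) = integral {0..r} (nearest_sqdist T)
      + integral {r..l} (nearest_sqdist T) + integral {l..u} (nearest_sqdist T)
      + integral {u..1} (nearest_sqdist T)" if "finite T" "T \<noteq> {}" for T
    using integral_nearest_sqdist_combine[OF that] r_pos r_le_l cell_le_1
    by (smt (verit) u_def)
  have "integral {r..l} (nearest_sqdist S') \<le> integral {r..l} (nearest_sqdist S)"
    "integral {u..1} (nearest_sqdist S') \<le> integral {u..1} (nearest_sqdist S)"
    using outside fin optimalD(2) by (intro integral_nearest_sqdist_mono; auto)+
  moreover have "integral {0..r} (nearest_sqdist S') \<le> integral {0..r} (nearest_sqdist Q\<^sub>1)"
    "integral {l..u} (nearest_sqdist S') \<le> integral {l..u} (nearest_sqdist Q\<^sub>2)"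
    using fin assms(1,2,5,6)
    by (intro integral_nearest_sqdist_mono nearest_sqdist_antimono; force simp: S'_def)+
  ultimately show ?thesis
    using global split[OF optimalD(2) fin(2)] split[OF fin(1,3)] by (simp add: u_def)
qed

lemma integral_cells_le:
  assumes "1 \<le> g" "m + g + 2 \<le> card (S \<inter> {..r}) + card (S \<inter> {l..l + r})"
  shows "integral {0..r} (nearest_sqdist S) + integral {l..l + r} (nearest_sqdist S)
    \<le> r^3 / (12 * (real m + 1/2)^2) + r^3 / (12 * (real g)^2)"
proof -
  define Q\<^sub>1 where "Q\<^sub>1 = (\<lambda>i. (2 * real i + 1) * r / (2 * real m + 1)) ` {..m}"
  define Q\<^sub>2 where "Q\<^sub>2 = (\<lambda>i. l + real i * r / real g) ` {..g}"
  have "Q\<^sub>1 \<subseteq> {..r}"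
    using r_pos by (auto simp: Q\<^sub>1_def divide_le_eq)
  moreover have "Q\<^sub>2 \<subseteq> {l..l + r}"
    using r_pos assms(1) by (auto simp: Q\<^sub>2_def divide_le_eq mult_right_mono)
  moreover have "r \<in> Q\<^sub>1" "l \<in> Q\<^sub>2" "l + r \<in> Q\<^sub>2"
    using assms(1) by (force simp: Q\<^sub>1_def Q\<^sub>2_def)+
  moreover have "card Q\<^sub>1 \<le> Suc m" "card Q\<^sub>2 \<le> Suc g"
    unfolding Q\<^sub>1_def Q\<^sub>2_def by (metis card_atMost card_image_le finite_atMost)+
  then have "card Q\<^sub>1 + card Q\<^sub>2 \<le> card (S \<inter> {..r}) + card (S \<inter> {l..l + r})"
    using assms(2) by linarith
  ultimately have "integral {0..r} (nearest_sqdist S) + integral {l..l + r} (nearest_sqdist S)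
    \<le> integral {0..r} (nearest_sqdist Q\<^sub>1) + integral {l..l + r} (nearest_sqdist Q\<^sub>2)"
    by (intro integral_le_exchange) (auto simp: Q\<^sub>1_def Q\<^sub>2_def)
  moreover have "integral {0..r} (nearest_sqdist Q\<^sub>1) \<le> r^3 / (12 * (real m + 1/2)^2)"
    using r_pos by (intro integral_nearest_sqdist_le_free_end) (auto simp: Q\<^sub>1_def)
  moreover have "integral {l..l + r} (nearest_sqdist Q\<^sub>2) \<le> r^3 / (12 * (real g)^2)"
    using r_pos assms(1) by (intro integral_nearest_sqdist_le_equispaced) (auto simp: Q\<^sub>2_def)
  ultimately show ?thesis by linarith
qed

lemma card_cells_ge: "1 \<le> card (S \<inter> {0..r})" "2 \<le> card (S \<inter> {l..l + r})"
proof -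
  have "r \<in> S \<inter> {0..r}" "{l, l + r} \<subseteq> S \<inter> {l..l + r}"
    using cell_ends_in_S r_pos by auto
  then show "1 \<le> card (S \<inter> {0..r})" "2 \<le> card (S \<inter> {l..l + r})"
    using optimalD(2) card_mono[of "S \<inter> {l..l + r}" "{l, l + r}"] r_pos
    by (auto simp: Suc_le_eq card_gt_0_iff)
qed

text \<open>A point below \<open>0\<close> could be moved into \<open>[0, r]\<close>, adding a whole gap there.\<close>
lemma points_nonneg: "\<forall>a\<in>S. 0 \<le> a"
proof (rule ccontr)
  assume "\<not> (\<forall>a\<in>S. 0 \<le> a)"
  then obtain a where "a \<in> S" "a < 0" by auto
  define c where "c = card (S \<inter> {0..r})"
  define d where "d = card (S \<inter> {l..l + r}) - 1"
  have cd: "1 \<le> c" "1 \<le> d" "card (S \<inter> {l..l + r}) = Suc d"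
    using card_cells_ge by (auto simp: c_def d_def)
  have sub: "insert a (S \<inter> {0..r}) \<subseteq> S \<inter> {..r}" using \<open>a \<in> S\<close> \<open>a < 0\<close> r_pos by auto
  have "Suc c \<le> card (S \<inter> {..r})"
    using card_mono[OF _ sub] optimalD(2) \<open>a < 0\<close> by (simp add: c_def)
  then have "integral {0..r} (nearest_sqdist S) + integral {l..l + r} (nearest_sqdist S)
      \<le> r^3 / (12 * (real c + 1/2)^2) + r^3 / (12 * (real d)^2)"
    using cd by (intro integral_cells_le) auto
  moreover have "r^3 / (12 * (real c)^2) \<le> integral {0..r} (nearest_sqdist S)"
    using integral_nearest_sqdist_ge_card[OF optimalD(2) r_pos cell_ends_in_S(1)]
    by (simp add: c_def)
  moreover have "r^3 / (12 * (real d)^2) \<le> integral {l..l + r} (nearest_sqdist S)"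
    using integral_nearest_sqdist_ge_fixed_ends[OF optimalD(2) cell_ends_in_S(2,3) cd(3,2)] by simp
  moreover have "r^3 / (12 * (real c + 1/2)^2) < r^3 / (12 * (real c)^2)"
    using r_pos cd(1)
    by (intro divide_strict_left_mono mult_strict_left_mono power_strict_mono) auto
  ultimately show False by linarith
qed

lemma card_cells_balanced:
  "card (S \<inter> {0..r}) \<le> card (S \<inter> {l..l + r}) \<and> card (S \<inter> {l..l + r}) \<le> card (S \<inter> {0..r}) + 1"
proof -
  define a where "a = card (S \<inter> {0..r}) - 1"
  define b where "b = card (S \<inter> {l..l + r}) - 1"
  have ab: "card (S \<inter> {0..r}) = Suc a" "card (S \<inter> {l..l + r}) = Suc b" "1 \<le> b"
    using card_cells_ge by (auto simp: a_def b_def)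
  have "S \<inter> {..r} = S \<inter> {0..r}" using points_nonneg by auto
  then have cells: "integral {0..r} (nearest_sqdist S) + integral {l..l + r} (nearest_sqdist S)
      \<le> r^3 / (12 * (real m + 1/2)^2) + r^3 / (12 * (real g)^2)"
    if "1 \<le> g" "m + g = a + b" for m g
    using that ab by (intro integral_cells_le) auto
  have lower: "r^3 / (12 * (real a + 1/2)^2) + r^3 / (12 * (real b)^2)
      \<le> integral {0..r} (nearest_sqdist S) + integral {l..l + r} (nearest_sqdist S)"
    using integral_nearest_sqdist_ge_free_end[OF optimalD(2) cell_ends_in_S(1) points_nonneg ab(1)]
      integral_nearest_sqdist_ge_fixed_ends[OF optimalD(2) cell_ends_in_S(2,3) ab(2,3)] by simp
  have "a \<le> b \<and> b \<le> a + 1"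
  proof (rule balanced_if_minimal_split[OF ab(3)])
    fix m g :: nat assume "1 \<le> g" "m + g = a + b"
    have scale: "r^3 / (12 * x) = r^3 / 12 * (1 / x)" for x :: real by simp
    have "r^3 / 12 * (1 / (real a + 1/2)^2 + 1 / (real b)^2)
        \<le> r^3 / 12 * (1 / (real m + 1/2)^2 + 1 / (real g)^2)"
      using lower cells[OF \<open>1 \<le> g\<close> \<open>m + g = a + b\<close>] by (simp only: scale distrib_left)
    then show "1 / (real a + 1/2)^2 + 1 / (real b)^2 \<le> 1 / (real m + 1/2)^2 + 1 / (real g)^2"
      using r_pos by simp
  qed
  then show ?thesis using ab by simp
qed

end

lemma grid_cell_right_end:
  "1 \<le> j \<Longrightarrow> real (j - 1) / real k + 1 / real k = real j / real k"
  by (simp add: of_nat_diff add_divide_distrib[symmetric])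

lemma cond_optimal_cells_grid:
  assumes "cond_optimal_set unifP {real i / real k | i. i \<in> {1..k}} n S" "2 \<le> j" "j \<le> k"
  shows "cond_optimal_cells {real i / real k | i. i \<in> {1..k}} S n
    (1 / real k) (real (j - 1) / real k)"
proof
  let ?B = "{real i / real k | i. i \<in> {1..k}}"
  have k: "0 < real k" using assms(2,3) by simp
  have right_end: "real (j - 1) / real k + 1 / real k = real j / real k"
    using assms(2) by (intro grid_cell_right_end) simp
  show "cond_optimal_set unifP ?B n S" by (fact assms(1))
  show "0 < 1 / real k" "1 / real k \<le> real (j - 1) / real k"
    using assms(2) k by (auto simp: divide_right_mono)
  show "real (j - 1) / real k + 1 / real k \<le> 1"
    unfolding right_end using assms(3) k by simp
  show "1 / real k \<in> ?B" using assms(2,3) by (auto intro!: exI[of _ 1])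
  show "real (j - 1) / real k \<in> ?B" using assms(2,3) by (intro CollectI exI[of _ "j - 1"]) auto
  show "real (j - 1) / real k + 1 / real k \<in> ?B"
    unfolding right_end using assms(2,3) by (intro CollectI exI[of _ j]) auto
  show "?B \<inter> ({..1 / real k} \<union> {real (j - 1) / real k..real (j - 1) / real k + 1 / real k})
      \<subseteq> {1 / real k, real (j - 1) / real k, real (j - 1) / real k + 1 / real k}"
  proof
    fix b
    assume "b \<in> ?B \<inter> ({..1 / real k} \<union> {real (j - 1) / real k..real (j - 1) / real k + 1 / real k})"
    then obtain i where i: "1 \<le> i" "b = real i / real k"
      and "real i \<le> 1 \<or> (real (j - 1) \<le> real i \<and> real i \<le> real j)"
      using k unfolding right_end by (auto simp: divide_le_cancel)
    then have "i = 1 \<or> i = j - 1 \<or> i = j" by linarith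
    then show "b \<in> {1 / real k, real (j - 1) / real k, real (j - 1) / real k + 1 / real k}"
      using i unfolding right_end by auto
  qed
qed

theorem lemma4p3:
  fixes k n j :: nat and S :: "real set"
  assumes "n \<ge> k"
    and "cond_optimal_set unifP {real i / real k | i. i \<in> {1..k}} n S"
    and "2 \<le> j" and "j \<le> k"
  shows "\<bar>int (card (S \<inter> {0 .. 1 / real k})) - int (card (S \<inter> {real (j - 1) / real k .. real j / real k}))\<bar> \<in> {0, 1}
         \<and> card (S \<inter> {0 .. 1 / real k}) \<le> card (S \<inter> {real (j - 1) / real k .. real j / real k})"
proof -
  interpret cond_optimal_cells "{real i / real k | i. i \<in> {1..k}}" S n
      "1 / real k" "real (j - 1) / real k"
    using cond_optimal_cells_grid[OF assms(2-4)] .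
  have "real (j - 1) / real k + 1 / real k = real j / real k"
    using assms(3) by (intro grid_cell_right_end) simp
  then show ?thesis using card_cells_balanced by auto
qed

end
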